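(* Let $\varrho=\sum_{\omega\in\Omega}\varrho(\omega)|\omega\rangle\langle\omega|$ and $\sigma=\sum_{\omega\in\Omega}\sigma(\omega)|\omega\rangle\langle\omega|$ be commuting density operators, diagonal in a common orthonormal basis $(|\omega\rangle)_{\omega\in\Omega}$ of a finite-dimensional Hilbert space. The following are equivalent: (1) $D_\alpha^{\mathrm{test}}(\varrho\|\sigma)=D_\alpha(\varrho\|\sigma)$ for all $\alpha\in(0,1)$; (2) $D_\alpha^{\mathrm{test}}(\varrho\|\sigma)=D_\alpha(\varrho\|\sigma)$ for some $\alpha\in(0,1)$; (3) there is $\Omega_0\subseteq\Omega$, with $\Omega_1:=\Omega\setminus\Omega_0$, such that $\sigma(\Omega_0)\varrho(\omega)=\varrho(\Omega_0)\sigma(\omega)$ for $\omega\in\Omega_0$ and $\sigma(\Omega_1)\varrho(\omega)=\varrho(\Omega_1)\sigma(\omega)$ for $\omega\in\Omega_1$. Moreover, if these hold then $D_\alpha^{\mathrm{test}}(\varrho\|\sigma)=\hat D_\alpha^{\mathrm{test}}(\varrho\|\sigma)=D_\alpha(\varrho\|\sigma)$ for all $\alpha\in(0,1)$.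
   Context: $\varrho(\Omega_0):=\sum_{\omega\in\Omega_0}\varrho(\omega)$, etc. For probability vectors $p,q$ and $\alpha\in(0,1)$, $D_\alpha(p\|q)=\frac{1}{\alpha-1}\log\sum_xp(x)^\alpha q(x)^{1-\alpha}$; for commuting states $D_\alpha(\varrho\|\sigma)$ is the classical divergence of the eigenvalue vectors. A test is an operator $0\le T\le I$; $\mathcal T(X):=(\operatorname{Tr}XT,\operatorname{Tr}X(I-T))$; $D_\alpha^{\mathrm{test}}(\varrho\|\sigma):=\max_{0\le T\le I}D_\alpha(\mathcal T(\varrho)\|\mathcal T(\sigma))$; $\hat D_\alpha^{\mathrm{test}}:=\sup_n\frac1nD_\alpha^{\mathrm{test}}(\varrho^{\otimes n}\|\sigma^{\otimes n})$. *)

theory Defs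
  imports "HOL-Analysis.Analysis" "HOL-Library.Extended_Real"
begin

text \<open>Operators on the Hilbert space with orthonormal basis indexed by a finite set I
  are represented by their matrices X :: 'b \<Rightarrow> 'b \<Rightarrow> complex (only entries in I \<times> I matter).\<close>

definition quad_form :: "'b set \<Rightarrow> ('b \<Rightarrow> 'b \<Rightarrow> complex) \<Rightarrow> ('b \<Rightarrow> complex) \<Rightarrow> complex" where
  "quad_form I X v = (\<Sum>i\<in>I. \<Sum>j\<in>I. cnj (v i) * X i j * v j)"

definition psd_op :: "'b set \<Rightarrow> ('b \<Rightarrow> 'b \<Rightarrow> complex) \<Rightarrow> bool" where
  "psd_op I X \<longleftrightarrow> (\<forall>v. Im (quad_form I X v) = 0 \<and> 0 \<le> Re (quad_form I X v))"

definition id_op :: "'b \<Rightarrow> 'b \<Rightarrow> complex" where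
  "id_op = (\<lambda>i j. if i = j then 1 else 0)"

definition is_test :: "'b set \<Rightarrow> ('b \<Rightarrow> 'b \<Rightarrow> complex) \<Rightarrow> bool" where
  "is_test I T \<longleftrightarrow> psd_op I T \<and> psd_op I (\<lambda>i j. id_op i j - T i j)"

definition tr_mult :: "'b set \<Rightarrow> ('b \<Rightarrow> 'b \<Rightarrow> complex) \<Rightarrow> ('b \<Rightarrow> 'b \<Rightarrow> complex) \<Rightarrow> complex" where
  "tr_mult I X T = (\<Sum>i\<in>I. \<Sum>j\<in>I. X i j * T j i)"

definition renyi_div :: "'c set \<Rightarrow> real \<Rightarrow> ('c \<Rightarrow> real) \<Rightarrow> ('c \<Rightarrow> real) \<Rightarrow> ereal" where
  "renyi_div A \<alpha> p q =
     (let s = (\<Sum>x\<in>A. p x powr \<alpha> * q x powr (1 - \<alpha>))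
      in if s = 0 then \<infinity> else ereal (ln s / (\<alpha> - 1)))"

definition test_meas :: "'b set \<Rightarrow> ('b \<Rightarrow> 'b \<Rightarrow> complex) \<Rightarrow> ('b \<Rightarrow> 'b \<Rightarrow> complex) \<Rightarrow> bool \<Rightarrow> real" where
  "test_meas I T X = (\<lambda>b. if b then Re (tr_mult I X T)
                          else Re (tr_mult I X (\<lambda>i j. id_op i j - T i j)))"

definition D_test :: "'b set \<Rightarrow> real \<Rightarrow> ('b \<Rightarrow> 'b \<Rightarrow> complex) \<Rightarrow> ('b \<Rightarrow> 'b \<Rightarrow> complex) \<Rightarrow> ereal" where
  "D_test I \<alpha> X Y = (SUP T\<in>{T. is_test I T}. renyi_div UNIV \<alpha> (test_meas I T X) (test_meas I T Y))"

definition diag_op :: "('a \<Rightarrow> real) \<Rightarrow> 'a \<Rightarrow> 'a \<Rightarrow> complex" where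
  "diag_op p = (\<lambda>i j. if i = j then complex_of_real (p i) else 0)"

text \<open>n-fold tensor power, with basis indexed by words of length n.\<close>
definition tensor_pow :: "nat \<Rightarrow> ('a \<Rightarrow> 'a \<Rightarrow> complex) \<Rightarrow> 'a list \<Rightarrow> 'a list \<Rightarrow> complex" where
  "tensor_pow n X = (\<lambda>xs ys. \<Prod>k<n. X (xs ! k) (ys ! k))"

definition words :: "nat \<Rightarrow> 'a list set" where
  "words n = {xs. length xs = n}"

definition D_test_reg :: "real \<Rightarrow> ('a \<Rightarrow> 'a \<Rightarrow> complex) \<Rightarrow> ('a \<Rightarrow> 'a \<Rightarrow> complex) \<Rightarrow> ereal" where
  "D_test_reg \<alpha> X Y = (SUP n\<in>{1..}. ereal (1 / real n) *
        D_test (words n) \<alpha> (tensor_pow n X) (tensor_pow n Y))"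

end

theory Submission
  imports Defs
begin

(* For diagonal states only the diagonal t i = Re (T i i) in [0,1] of a test T matters, and the
   Renyi divergence of the two-outcome distributions is determined by
     Q(t) = G(sum rho t, sum sigma t) + G(sum rho (1 - t), sum sigma (1 - t)),   G(x, y) = x^a y^(1-a).
   Hoelder's inequality sum_i G(x_i, y_i) <= G(sum x, sum y), with equality iff x and y are
   proportional, gives Q(t) >= sum_w G(rho w, sigma w), i.e. D_test <= D.  Since Q is concave in t,
   its minimum over the cube is attained at a projection t = 1_Omega0, where
   Q = G(rho(Omega0), sigma(Omega0)) + G(rho(Omega1), sigma(Omega1)); by the equality case of Hoelder
   this equals sum_w G(rho w, sigma w) exactly when rho and sigma are proportional on Omega0 and on
   Omega1, a condition that does not depend on a.  For the regularisation, D_test of n copies is at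
   most D(rho^n || sigma^n) = n D(rho || sigma), while the single-copy term already equals D(rho || sigma). *)

definition geom_mean :: "real \<Rightarrow> real \<Rightarrow> real \<Rightarrow> real" where
  "geom_mean a x y = x powr a * y powr (1 - a)"

lemma geom_mean_nonneg [simp]: "0 \<le> geom_mean a x y"
  by (simp add: geom_mean_def)

lemma geom_mean_0_left [simp]: "0 < a \<Longrightarrow> geom_mean a 0 y = 0"
  by (simp add: geom_mean_def)

lemma geom_mean_0_right [simp]: "a < 1 \<Longrightarrow> geom_mean a x 0 = 0"
  by (simp add: geom_mean_def)

lemma geom_mean_same:
  assumes "0 \<le> x" "0 < a" "a < 1"
  shows "geom_mean a x x = x"
  using assms by (cases "x = 0") (simp_all add: geom_mean_def flip: powr_add)

lemma geom_mean_mult_mult: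
  assumes "0 \<le> x" "0 \<le> y" "0 \<le> u" "0 \<le> v"
  shows "geom_mean a (x * u) (y * v) = geom_mean a x y * geom_mean a u v"
  using assms by (simp add: geom_mean_def powr_mult)

lemma geom_mean_scale:
  assumes "0 \<le> c" "0 \<le> x" "0 \<le> y" "0 < a" "a < 1"
  shows "geom_mean a (c * x) (c * y) = c * geom_mean a x y"
  using assms by (simp add: geom_mean_mult_mult geom_mean_same)

lemma geom_mean_le:
  assumes "0 \<le> x" "0 \<le> y" "0 < a" "a < 1"
  shows "geom_mean a x y \<le> a * x + (1 - a) * y"
proof (cases "x = 0 \<or> y = 0")
  case True
  then show ?thesis using assms by auto
next
  case False
  then show ?thesis
    using Youngs_inequality_0[of a "1 - a" x y] assms by (simp add: geom_mean_def)
qed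

lemma geom_mean_eq_iff:
  assumes "0 \<le> x" "0 \<le> y" "0 < a" "a < 1"
  shows "geom_mean a x y = a * x + (1 - a) * y \<longleftrightarrow> x = y"
proof
  assume eq: "geom_mean a x y = a * x + (1 - a) * y"
  show "x = y"
  proof (cases "x = 0 \<or> y = 0")
    case True
    then show ?thesis using eq assms by auto
  next
    case False
    then have pos: "0 < x" "0 < y" using assms by auto
    define m where "m = a * x + (1 - a) * y"
    have "0 < m" using pos assms unfolding m_def by (simp add: add_pos_nonneg)
    \<comment> \<open>With u = x/m, v = y/m: a u + (1-a) v = 1 and a ln u + (1-a) ln v = 0,
      so the two nonnegative defects u - 1 - ln u, v - 1 - ln v must vanish.\<close>
    have "ln m = ln (geom_mean a x y)"
      using eq by (simp add: m_def)
    also have "\<dots> = a * ln x + (1 - a) * ln y"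
      using pos by (simp add: geom_mean_def ln_mult ln_powr)
    finally have "ln m = a * ln x + (1 - a) * ln y" .
    then have "a * ln (x / m) + (1 - a) * ln (y / m) = 0"
      using pos \<open>0 < m\<close> by (simp add: ln_div algebra_simps)
    moreover have "a * (x / m) + (1 - a) * (y / m) = 1"
      using \<open>0 < m\<close> by (simp add: m_def add_divide_distrib [symmetric])
    ultimately have "a * (x / m - 1 - ln (x / m)) + (1 - a) * (y / m - 1 - ln (y / m)) = 0"
      by (simp add: algebra_simps)
    moreover have "0 \<le> x / m - 1 - ln (x / m)" "0 \<le> y / m - 1 - ln (y / m)"
      using pos \<open>0 < m\<close> by (simp_all add: ln_le_minus_one)
    moreover have "0 \<le> a * (x / m - 1 - ln (x / m))" "0 \<le> (1 - a) * (y / m - 1 - ln (y / m))"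
      using calculation(2,3) assms by simp_all
    ultimately have "a * (x / m - 1 - ln (x / m)) = 0" "(1 - a) * (y / m - 1 - ln (y / m)) = 0"
      by linarith+
    then have "ln (x / m) = x / m - 1" "ln (y / m) = y / m - 1"
      using assms by simp_all
    then have "x / m = 1" "y / m = 1"
      using pos \<open>0 < m\<close> ln_eq_minus_one[of "x / m"] ln_eq_minus_one[of "y / m"] by simp_all
    then show ?thesis by simp
  qed
qed (use assms geom_mean_same in \<open>auto simp: algebra_simps\<close>)

definition proportional_on :: "'b set \<Rightarrow> ('b \<Rightarrow> real) \<Rightarrow> ('b \<Rightarrow> real) \<Rightarrow> bool" where
  "proportional_on A x y \<longleftrightarrow> (\<forall>i\<in>A. sum y A * x i = sum x A * y i)"

lemma geom_mean_sum_minus_sum_geom_mean: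
  fixes x y :: "'b \<Rightarrow> real"
  assumes "finite A" "\<And>i. i \<in> A \<Longrightarrow> 0 \<le> x i" "\<And>i. i \<in> A \<Longrightarrow> 0 \<le> y i"
    and X: "0 < sum x A" and Y: "0 < sum y A"
  defines "u \<equiv> \<lambda>i. x i / sum x A" and "v \<equiv> \<lambda>i. y i / sum y A"
  shows "geom_mean a (sum x A) (sum y A) - (\<Sum>i\<in>A. geom_mean a (x i) (y i)) =
         geom_mean a (sum x A) (sum y A) * (\<Sum>i\<in>A. a * u i + (1 - a) * v i - geom_mean a (u i) (v i))"
proof -
  have "geom_mean a (x i) (y i) = geom_mean a (sum x A) (sum y A) * geom_mean a (u i) (v i)"
    if "i \<in> A" for i
    using geom_mean_mult_mult[of "sum x A" "sum y A" "u i" "v i" a] X Y assms(2,3)[OF that]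
    by (simp add: u_def v_def)
  moreover have "(\<Sum>i\<in>A. a * u i + (1 - a) * v i) = 1"
    using X Y by (simp add: u_def v_def sum.distrib flip: sum_distrib_left sum_divide_distrib)
  ultimately show ?thesis
    by (simp add: sum_subtractf sum_distrib_left right_diff_distrib)
qed

lemma sum_geom_mean_le:
  fixes x y :: "'b \<Rightarrow> real"
  assumes "finite A" "\<And>i. i \<in> A \<Longrightarrow> 0 \<le> x i" "\<And>i. i \<in> A \<Longrightarrow> 0 \<le> y i"
    and a: "0 < a" "a < 1"
  shows "(\<Sum>i\<in>A. geom_mean a (x i) (y i)) \<le> geom_mean a (sum x A) (sum y A)"
proof (cases "sum x A = 0 \<or> sum y A = 0")
  case True
  then have "(\<forall>i\<in>A. x i = 0) \<or> (\<forall>i\<in>A. y i = 0)"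
    using assms by (simp add: sum_nonneg_eq_0_iff)
  then show ?thesis using True a by auto
next
  case False
  then have "0 < sum x A" "0 < sum y A"
    using assms by (simp_all add: order.not_eq_order_implies_strict sum_nonneg)
  moreover have "0 \<le> (\<Sum>i\<in>A. a * (x i / sum x A) + (1 - a) * (y i / sum y A)
                        - geom_mean a (x i / sum x A) (y i / sum y A))"
    using assms calculation by (intro sum_nonneg, subst diff_ge_0_iff_ge, intro geom_mean_le) auto
  ultimately have "0 \<le> geom_mean a (sum x A) (sum y A) - (\<Sum>i\<in>A. geom_mean a (x i) (y i))"
    using geom_mean_sum_minus_sum_geom_mean[where x = x and y = y and a = a, OF assms(1-3)] by simp
  then show ?thesis by simp
qed

lemma sum_geom_mean_eq_iff_proportional:
  fixes x y :: "'b \<Rightarrow> real"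
  assumes "finite A" "\<And>i. i \<in> A \<Longrightarrow> 0 \<le> x i" "\<And>i. i \<in> A \<Longrightarrow> 0 \<le> y i"
    and a: "0 < a" "a < 1"
  shows "(\<Sum>i\<in>A. geom_mean a (x i) (y i)) = geom_mean a (sum x A) (sum y A) \<longleftrightarrow>
         proportional_on A x y"
proof (cases "sum x A = 0 \<or> sum y A = 0")
  case True
  then have "(\<forall>i\<in>A. x i = 0) \<or> (\<forall>i\<in>A. y i = 0)"
    using assms by (simp add: sum_nonneg_eq_0_iff)
  then show ?thesis using True a by (auto simp: proportional_on_def)
next
  case False
  then have X: "0 < sum x A" and Y: "0 < sum y A"
    using assms by (simp_all add: order.not_eq_order_implies_strict sum_nonneg)
  define u where "u i = x i / sum x A" for i
  define v where "v i = y i / sum y A" for i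
  have uv: "0 \<le> u i" "0 \<le> v i" if "i \<in> A" for i
    using assms(2,3)[OF that] X Y by (simp_all add: u_def v_def)
  have "(\<Sum>i\<in>A. geom_mean a (x i) (y i)) = geom_mean a (sum x A) (sum y A) \<longleftrightarrow>
        (\<Sum>i\<in>A. a * u i + (1 - a) * v i - geom_mean a (u i) (v i)) = 0"
    using geom_mean_sum_minus_sum_geom_mean[where x = x and y = y and a = a, OF assms(1-3) X Y] X Y
    by (auto simp: u_def v_def geom_mean_def)
  also have "\<dots> \<longleftrightarrow> (\<forall>i\<in>A. geom_mean a (u i) (v i) = a * u i + (1 - a) * v i)"
    using uv a by (subst sum_nonneg_eq_0_iff) (auto simp: assms(1) geom_mean_le)
  also have "\<dots> \<longleftrightarrow> (\<forall>i\<in>A. u i = v i)"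
    using uv a by (simp add: geom_mean_eq_iff)
  also have "\<dots> \<longleftrightarrow> proportional_on A x y"
    using X Y by (auto simp: proportional_on_def u_def v_def field_simps)
  finally show ?thesis .
qed

lemma geom_mean_superadditive:
  assumes "0 \<le> x1" "0 \<le> y1" "0 \<le> x2" "0 \<le> y2" "0 < a" "a < 1"
  shows "geom_mean a x1 y1 + geom_mean a x2 y2 \<le> geom_mean a (x1 + x2) (y1 + y2)"
  using sum_geom_mean_le[of UNIV "\<lambda>b. if b then x1 else x2" "\<lambda>b. if b then y1 else y2" a] assms
  by (simp add: UNIV_bool add.commute)

lemma geom_mean_concave:
  assumes "u \<in> {0..1}" "0 \<le> x1" "0 \<le> y1" "0 \<le> x2" "0 \<le> y2" "0 < a" "a < 1"
  shows "(1 - u) * geom_mean a x1 y1 + u * geom_mean a x2 y2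
         \<le> geom_mean a ((1 - u) * x1 + u * x2) ((1 - u) * y1 + u * y2)"
  using geom_mean_superadditive[of "(1 - u) * x1" "(1 - u) * y1" "u * x2" "u * y2" a] assms
  by (simp add: geom_mean_scale)

definition test_Q :: "real \<Rightarrow> 'b set \<Rightarrow> ('b \<Rightarrow> real) \<Rightarrow> ('b \<Rightarrow> real) \<Rightarrow> ('b \<Rightarrow> real) \<Rightarrow> real" where
  "test_Q a I p q t =
     geom_mean a (\<Sum>i\<in>I. p i * t i) (\<Sum>i\<in>I. q i * t i)
   + geom_mean a (\<Sum>i\<in>I. p i * (1 - t i)) (\<Sum>i\<in>I. q i * (1 - t i))"

lemma test_Q_nonneg: "0 \<le> test_Q a I p q t"
  by (simp add: test_Q_def)

lemma test_Q_cong: "(\<And>i. i \<in> I \<Longrightarrow> t i = t' i) \<Longrightarrow> test_Q a I p q t = test_Q a I p q t'"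
  unfolding test_Q_def by (simp cong: sum.cong)

lemma test_Q_indicator:
  assumes "finite I" "S \<subseteq> I"
  shows "test_Q a I p q (indicator S) =
         geom_mean a (sum p S) (sum q S) + geom_mean a (sum p (I - S)) (sum q (I - S))"
proof -
  have on_S: "(\<Sum>i\<in>I. f i * indicator S i) = sum f S" for f :: "_ \<Rightarrow> real"
    using assms by (simp add: indicator_times_eq_if Int_absorb1 flip: sum.inter_restrict)
  moreover have "(\<Sum>i\<in>I. f i * (1 - indicator S i)) = sum f (I - S)" for f :: "_ \<Rightarrow> real"
    using assms on_S[of f] by (simp add: right_diff_distrib sum_subtractf sum_diff finite_subset)
  ultimately show ?thesis by (simp add: test_Q_def)
qed

lemma test_Q_concave:
  assumes p: "\<And>i. i \<in> I \<Longrightarrow> 0 \<le> p i" and q: "\<And>i. i \<in> I \<Longrightarrow> 0 \<le> q i"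
    and t: "\<forall>i\<in>I. t i \<in> {0..1}" and t': "\<forall>i\<in>I. t' i \<in> {0..1}"
    and u: "u \<in> {0..1}" and a: "0 < a" "a < 1"
  shows "(1 - u) * test_Q a I p q t + u * test_Q a I p q t'
         \<le> test_Q a I p q (\<lambda>i. (1 - u) * t i + u * t' i)"
proof -
  have affine: "(\<Sum>i\<in>I. f i * ((1 - u) * s i + u * s' i)) =
      (1 - u) * (\<Sum>i\<in>I. f i * s i) + u * (\<Sum>i\<in>I. f i * s' i)" for f s s' :: "_ \<Rightarrow> real"
  proof -
    have "f i * ((1 - u) * s i + u * s' i) = (1 - u) * (f i * s i) + u * (f i * s' i)" for i
      by (simp add: algebra_simps)
    then show ?thesis by (simp add: sum.distrib sum_distrib_left)
  qed
  have complement: "1 - ((1 - u) * t i + u * t' i) = (1 - u) * (1 - t i) + u * (1 - t' i)" for i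
    by (simp add: algebra_simps)
  have nonneg: "0 \<le> (\<Sum>i\<in>I. f i * s i)" "0 \<le> (\<Sum>i\<in>I. f i * (1 - s i))"
    if "\<And>i. i \<in> I \<Longrightarrow> 0 \<le> f i" "\<forall>i\<in>I. s i \<in> {0..1}" for f s :: "_ \<Rightarrow> real"
    using that by (auto intro!: sum_nonneg)
  have "(1 - u) * geom_mean a (\<Sum>i\<in>I. p i * t i) (\<Sum>i\<in>I. q i * t i)
        + u * geom_mean a (\<Sum>i\<in>I. p i * t' i) (\<Sum>i\<in>I. q i * t' i)
      \<le> geom_mean a (\<Sum>i\<in>I. p i * ((1 - u) * t i + u * t' i))
                     (\<Sum>i\<in>I. q i * ((1 - u) * t i + u * t' i))"
    unfolding affine by (intro geom_mean_concave[OF u _ _ _ _ a] nonneg p q t t')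
  moreover have "(1 - u) * geom_mean a (\<Sum>i\<in>I. p i * (1 - t i)) (\<Sum>i\<in>I. q i * (1 - t i))
        + u * geom_mean a (\<Sum>i\<in>I. p i * (1 - t' i)) (\<Sum>i\<in>I. q i * (1 - t' i))
      \<le> geom_mean a (\<Sum>i\<in>I. p i * (1 - ((1 - u) * t i + u * t' i)))
                     (\<Sum>i\<in>I. q i * (1 - ((1 - u) * t i + u * t' i)))"
    unfolding complement affine by (intro geom_mean_concave[OF u _ _ _ _ a] nonneg p q t t')
  ultimately show ?thesis
    unfolding test_Q_def distrib_left by linarith
qed

lemma sum_geom_mean_le_test_Q:
  assumes "finite I" and p: "\<And>i. i \<in> I \<Longrightarrow> 0 \<le> p i" and q: "\<And>i. i \<in> I \<Longrightarrow> 0 \<le> q i"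
    and t: "\<forall>i\<in>I. t i \<in> {0..1}" and a: "0 < a" "a < 1"
  shows "(\<Sum>i\<in>I. geom_mean a (p i) (q i)) \<le> test_Q a I p q t"
proof -
  have "geom_mean a (p i) (q i) =
        geom_mean a (p i * t i) (q i * t i) + geom_mean a (p i * (1 - t i)) (q i * (1 - t i))"
    if "i \<in> I" for i
    using geom_mean_scale[of "t i" "p i" "q i" a] geom_mean_scale[of "1 - t i" "p i" "q i" a]
      p[OF that] q[OF that] t that a
    by (simp add: mult.commute algebra_simps)
  then have "(\<Sum>i\<in>I. geom_mean a (p i) (q i)) =
             (\<Sum>i\<in>I. geom_mean a (p i * t i) (q i * t i))
           + (\<Sum>i\<in>I. geom_mean a (p i * (1 - t i)) (q i * (1 - t i)))"
    by (simp add: sum.distrib)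
  also have "\<dots> \<le> test_Q a I p q t"
    unfolding test_Q_def using assms by (intro add_mono sum_geom_mean_le) auto
  finally show ?thesis .
qed

lemma test_Q_indicator_eq_iff:
  assumes "finite I" and p: "\<And>i. i \<in> I \<Longrightarrow> 0 \<le> p i" and q: "\<And>i. i \<in> I \<Longrightarrow> 0 \<le> q i"
    and S: "S \<subseteq> I" and a: "0 < a" "a < 1"
  shows "test_Q a I p q (indicator S) = (\<Sum>i\<in>I. geom_mean a (p i) (q i)) \<longleftrightarrow>
         proportional_on S p q \<and> proportional_on (I - S) p q"
proof -
  have gap: "0 \<le> geom_mean a (sum p A) (sum q A) - (\<Sum>i\<in>A. geom_mean a (p i) (q i))"
    and gap_eq_0: "geom_mean a (sum p A) (sum q A) - (\<Sum>i\<in>A. geom_mean a (p i) (q i)) = 0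
                    \<longleftrightarrow> proportional_on A p q"
    if "A \<subseteq> I" for A
  proof -
    have "finite A" "\<And>i. i \<in> A \<Longrightarrow> 0 \<le> p i" "\<And>i. i \<in> A \<Longrightarrow> 0 \<le> q i"
      using that finite_subset[OF that \<open>finite I\<close>] p q by auto
    from sum_geom_mean_le[where x = p and y = q, OF this a]
      sum_geom_mean_eq_iff_proportional[where x = p and y = q, OF this a]
    show "0 \<le> geom_mean a (sum p A) (sum q A) - (\<Sum>i\<in>A. geom_mean a (p i) (q i))"
      and "geom_mean a (sum p A) (sum q A) - (\<Sum>i\<in>A. geom_mean a (p i) (q i)) = 0
                    \<longleftrightarrow> proportional_on A p q"
      by auto
  qed
  have "test_Q a I p q (indicator S) - (\<Sum>i\<in>I. geom_mean a (p i) (q i)) =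
      (geom_mean a (sum p S) (sum q S) - (\<Sum>i\<in>S. geom_mean a (p i) (q i)))
    + (geom_mean a (sum p (I - S)) (sum q (I - S)) - (\<Sum>i\<in>I - S. geom_mean a (p i) (q i)))"
    using test_Q_indicator[OF \<open>finite I\<close> S, of a p q]
      sum.subset_diff[OF S \<open>finite I\<close>, of "\<lambda>i. geom_mean a (p i) (q i)"] by simp
  then show ?thesis
    using gap[OF S] gap[of "I - S"] gap_eq_0[OF S] gap_eq_0[of "I - S"] by auto
qed

lemma ex_test_Q_fun_upd_le:
  assumes p: "\<And>i. i \<in> I \<Longrightarrow> 0 \<le> p i" and q: "\<And>i. i \<in> I \<Longrightarrow> 0 \<le> q i"
    and t: "\<forall>i\<in>I. t i \<in> {0..1}" and "k \<in> I" and a: "0 < a" "a < 1"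
  shows "\<exists>v\<in>{0, 1}. test_Q a I p q (t(k := v)) \<le> test_Q a I p q t"
proof -
  let ?A = "test_Q a I p q (t(k := 0))" and ?B = "test_Q a I p q (t(k := 1))"
  have split: "(\<lambda>i. (1 - t k) * (t(k := 0)) i + t k * (t(k := 1)) i) = t"
    by (rule ext) (simp add: algebra_simps)
  have u: "t k \<in> {0..1}" using t \<open>k \<in> I\<close> by blast
  have "\<forall>i\<in>I. (t(k := 0)) i \<in> {0..1}" "\<forall>i\<in>I. (t(k := 1)) i \<in> {0..1}"
    using t by auto
  from test_Q_concave[where p = p and q = q, OF p q this u a]
  have "(1 - t k) * ?A + t k * ?B \<le> test_Q a I p q t"
    unfolding split .
  moreover have "min ?A ?B \<le> (1 - t k) * ?A + t k * ?B"
    using convex_bound_le[of "- ?A" "- min ?A ?B" "- ?B" "1 - t k" "t k"] u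
    by (simp add: algebra_simps)
  ultimately have "?A \<le> test_Q a I p q t \<or> ?B \<le> test_Q a I p q t"
    by linarith
  then show ?thesis by blast
qed

lemma ex_indicator_test_Q_le:
  assumes "finite I" and p: "\<And>i. i \<in> I \<Longrightarrow> 0 \<le> p i" and q: "\<And>i. i \<in> I \<Longrightarrow> 0 \<le> q i"
    and t: "\<forall>i\<in>I. t i \<in> {0..1}" and a: "0 < a" "a < 1"
  shows "\<exists>S\<subseteq>I. test_Q a I p q (indicator S) \<le> test_Q a I p q t"
proof -
  \<comment> \<open>Induction on the set K of coordinates where t may be fractional.\<close>
  have "\<forall>t. (\<forall>i\<in>I. t i \<in> {0..1}) \<and> (\<forall>i\<in>I - K. t i \<in> {0, 1}) \<longrightarrow>
          (\<exists>S\<subseteq>I. test_Q a I p q (indicator S) \<le> test_Q a I p q t)" if "K \<subseteq> I" for K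
    using finite_subset[OF that \<open>finite I\<close>] that
  proof (induction K rule: finite_subset_induct)
    case empty
    show ?case
    proof (intro allI impI)
      fix t :: "_ \<Rightarrow> real"
      assume "(\<forall>i\<in>I. t i \<in> {0..1}) \<and> (\<forall>i\<in>I - {}. t i \<in> {0, 1})"
      then have "test_Q a I p q (indicator {i\<in>I. t i = 1}) = test_Q a I p q t"
        by (intro test_Q_cong) auto
      then show "\<exists>S\<subseteq>I. test_Q a I p q (indicator S) \<le> test_Q a I p q t"
        by (intro exI[of _ "{i\<in>I. t i = 1}"]) auto
    qed
  next
    case (insert k K)
    show ?case
    proof (intro allI impI)
      fix t :: "_ \<Rightarrow> real"
      assume h: "(\<forall>i\<in>I. t i \<in> {0..1}) \<and> (\<forall>i\<in>I - insert k K. t i \<in> {0, 1})"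
      then have "\<forall>i\<in>I. t i \<in> {0..1}" ..
      from ex_test_Q_fun_upd_le[where p = p and q = q, OF p q this \<open>k \<in> I\<close> a]
      obtain v where v: "v \<in> {0, 1}" "test_Q a I p q (t(k := v)) \<le> test_Q a I p q t" ..
      have "(\<forall>i\<in>I. (t(k := v)) i \<in> {0..1}) \<and> (\<forall>i\<in>I - K. (t(k := v)) i \<in> {0, 1})"
        using h v(1) by fastforce
      then obtain S where "S \<subseteq> I" "test_Q a I p q (indicator S) \<le> test_Q a I p q (t(k := v))"
        using insert.IH by blast
      with v(2) show "\<exists>S\<subseteq>I. test_Q a I p q (indicator S) \<le> test_Q a I p q t"
        by (blast intro: order_trans)
    qed
  qed
  then show ?thesis using t by blast
qed

lemma ex_indicator_test_Q_min:
  assumes "finite I" and p: "\<And>i. i \<in> I \<Longrightarrow> 0 \<le> p i" and q: "\<And>i. i \<in> I \<Longrightarrow> 0 \<le> q i"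
    and a: "0 < a" "a < 1"
  shows "\<exists>S\<subseteq>I. \<forall>t. (\<forall>i\<in>I. t i \<in> {0..1}) \<longrightarrow> test_Q a I p q (indicator S) \<le> test_Q a I p q t"
proof -
  have "finite (Pow I)" "Pow I \<noteq> {}" using \<open>finite I\<close> by auto
  from ex_is_arg_min_if_finite[OF this, of "\<lambda>S. test_Q a I p q (indicator S)"]
  obtain S where "is_arg_min (\<lambda>S. test_Q a I p q (indicator S)) (\<lambda>S. S \<in> Pow I) S" ..
  then have "S \<subseteq> I"
    and min: "\<And>S'. S' \<subseteq> I \<Longrightarrow> test_Q a I p q (indicator S) \<le> test_Q a I p q (indicator S')"
    unfolding is_arg_min_linorder by auto
  show ?thesis
  proof (intro exI[of _ S] conjI allI impI)
    fix t :: "_ \<Rightarrow> real"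
    assume "\<forall>i\<in>I. t i \<in> {0..1}"
    from ex_indicator_test_Q_le[where p = p and q = q, OF assms(1) p q this a]
    obtain S' where "S' \<subseteq> I" "test_Q a I p q (indicator S') \<le> test_Q a I p q t"
      by blast
    then show "test_Q a I p q (indicator S) \<le> test_Q a I p q t"
      using min[of S'] by linarith
  qed fact
qed

definition renyi_of_Q :: "real \<Rightarrow> real \<Rightarrow> ereal" where
  "renyi_of_Q a s = (if s = 0 then \<infinity> else ereal (ln s / (a - 1)))"

lemma renyi_div_eq_renyi_of_Q: "renyi_div A a p q = renyi_of_Q a (\<Sum>x\<in>A. geom_mean a (p x) (q x))"
  by (simp add: renyi_div_def renyi_of_Q_def geom_mean_def Let_def)

lemma renyi_of_Q_antimono:
  assumes "0 \<le> s" "s \<le> s'" "a < 1"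
  shows "renyi_of_Q a s' \<le> renyi_of_Q a s"
proof (cases "s = 0")
  case False
  then have "ln s \<le> ln s'" using assms by simp
  then have "ln s' / (a - 1) \<le> ln s / (a - 1)" using assms by (simp add: divide_right_mono_neg)
  then show ?thesis using False assms by (simp add: renyi_of_Q_def)
qed (simp add: renyi_of_Q_def)

lemma renyi_of_Q_inject:
  assumes "0 \<le> s" "0 \<le> s'" "a < 1"
  shows "renyi_of_Q a s = renyi_of_Q a s' \<longleftrightarrow> s = s'"
proof
  assume eq: "renyi_of_Q a s = renyi_of_Q a s'"
  show "s = s'"
  proof (cases "s = 0 \<or> s' = 0")
    case False
    then have "ln s / (a - 1) = ln s' / (a - 1)" using eq by (simp add: renyi_of_Q_def)
    then show ?thesis using False assms by simp
  qed (use eq in \<open>auto simp: renyi_of_Q_def split: if_splits\<close>)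
qed simp

lemma renyi_of_Q_power:
  assumes "0 \<le> s" "1 \<le> n"
  shows "renyi_of_Q a (s ^ n) = ereal (real n) * renyi_of_Q a s"
  using assms by (cases "s = 0") (simp_all add: renyi_of_Q_def ln_realpow)

definition diagonal_on :: "'b set \<Rightarrow> ('b \<Rightarrow> real) \<Rightarrow> ('b \<Rightarrow> 'b \<Rightarrow> complex) \<Rightarrow> bool" where
  "diagonal_on I p X \<longleftrightarrow> (\<forall>i\<in>I. \<forall>j\<in>I. X i j = (if i = j then complex_of_real (p i) else 0))"

lemma diagonal_on_diag_op: "diagonal_on I p (diag_op p)"
  by (simp add: diagonal_on_def diag_op_def)

lemma tr_mult_diagonal:
  assumes "diagonal_on I p X" "finite I"
  shows "tr_mult I X T = (\<Sum>i\<in>I. complex_of_real (p i) * T i i)"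
  unfolding tr_mult_def
proof (rule sum.cong [OF refl])
  fix i assume "i \<in> I"
  then have "(\<Sum>j\<in>I. X i j * T j i) = (\<Sum>j\<in>I. if j = i then complex_of_real (p i) * T j i else 0)"
    using assms(1) unfolding diagonal_on_def by (intro sum.cong) auto
  then show "(\<Sum>j\<in>I. X i j * T j i) = complex_of_real (p i) * T i i"
    using assms(2) \<open>i \<in> I\<close> by simp
qed

lemma test_meas_diagonal:
  assumes "diagonal_on I p X" "finite I"
  shows "test_meas I T X True = (\<Sum>i\<in>I. p i * Re (T i i))"
    and "test_meas I T X False = (\<Sum>i\<in>I. p i * (1 - Re (T i i)))"
  using tr_mult_diagonal[OF assms, of T] tr_mult_diagonal[OF assms, of "\<lambda>i j. id_op i j - T i j"]
  by (simp_all add: test_meas_def Re_sum id_op_def)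

lemma quad_form_basis_vector:
  assumes "finite I" "i \<in> I"
  shows "quad_form I X (\<lambda>j. if j = i then 1 else 0) = X i i"
proof -
  have "quad_form I X (\<lambda>j. if j = i then 1 else 0) =
        (\<Sum>k\<in>I. if k = i then (\<Sum>l\<in>I. if l = i then X k l else 0) else 0)"
    unfolding quad_form_def by (intro sum.cong) (auto intro: sum.cong)
  then show ?thesis using assms by simp
qed

lemma is_test_diagonal_entry:
  assumes "is_test I T" "finite I" "i \<in> I"
  shows "Re (T i i) \<in> {0..1}"
proof -
  let ?e = "\<lambda>j. if j = i then 1 else 0"
  have "0 \<le> Re (quad_form I T ?e)" "0 \<le> Re (quad_form I (\<lambda>i j. id_op i j - T i j) ?e)"
    using assms(1) unfolding is_test_def psd_op_def by blast+
  then show ?thesis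
    by (simp add: quad_form_basis_vector[OF assms(2,3)] id_op_def)
qed

lemma psd_op_diag_op:
  assumes "finite I" "\<And>i. i \<in> I \<Longrightarrow> 0 \<le> t i"
  shows "psd_op I (diag_op t)"
proof -
  have "quad_form I (diag_op t) v = (\<Sum>i\<in>I. cnj (v i) * complex_of_real (t i) * v i)" for v
    unfolding quad_form_def diag_op_def using assms(1)
    by (intro sum.cong) (simp_all add: if_distrib if_distribR cong: if_cong)
  also have "\<dots> v = complex_of_real (\<Sum>i\<in>I. t i * ((Re (v i))\<^sup>2 + (Im (v i))\<^sup>2))" for v
    by (simp add: complex_eq_iff power2_eq_square algebra_simps Re_sum Im_sum)
  finally show ?thesis
    unfolding psd_op_def using assms(2) by (simp add: sum_nonneg)
qed

lemma is_test_diag_op: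
  assumes "finite I" "\<forall>i\<in>I. t i \<in> {0..1}"
  shows "is_test I (diag_op t)"
proof -
  have "(\<lambda>i j. id_op i j - diag_op t i j) = diag_op (\<lambda>i. 1 - t i)"
    by (auto simp: id_op_def diag_op_def fun_eq_iff)
  then show ?thesis
    unfolding is_test_def using psd_op_diag_op assms by auto
qed

locale diagonal_states =
  fixes I :: "'b set" and p q :: "'b \<Rightarrow> real" and X Y :: "'b \<Rightarrow> 'b \<Rightarrow> complex"
  assumes finite: "finite I"
    and diagonal_X: "diagonal_on I p X" and diagonal_Y: "diagonal_on I q Y"
    and p_nonneg: "\<And>i. i \<in> I \<Longrightarrow> 0 \<le> p i" and q_nonneg: "\<And>i. i \<in> I \<Longrightarrow> 0 \<le> q i"
begin

lemma renyi_div_test_meas: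
  "renyi_div UNIV a (test_meas I T X) (test_meas I T Y) = renyi_of_Q a (test_Q a I p q (\<lambda>i. Re (T i i)))"
  using test_meas_diagonal[OF diagonal_X finite] test_meas_diagonal[OF diagonal_Y finite]
  by (simp add: renyi_div_eq_renyi_of_Q test_Q_def UNIV_bool add.commute)

context
  fixes a :: real
  assumes a: "0 < a" "a < 1"
begin

lemma D_test_le_renyi_div: "D_test I a X Y \<le> renyi_div I a p q"
  unfolding D_test_def renyi_div_test_meas renyi_div_eq_renyi_of_Q[of I]
proof (rule SUP_least)
  fix T assume "T \<in> {T. is_test I T}"
  then have "\<forall>i\<in>I. Re (T i i) \<in> {0..1}"
    using is_test_diagonal_entry[OF _ finite] by simp
  from sum_geom_mean_le_test_Q[where p = p and q = q, OF finite p_nonneg q_nonneg this a]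
  show "renyi_of_Q a (test_Q a I p q (\<lambda>i. Re (T i i))) \<le> renyi_of_Q a (\<Sum>i\<in>I. geom_mean a (p i) (q i))"
    by (intro renyi_of_Q_antimono) (simp_all add: sum_nonneg a)
qed

lemma renyi_of_Q_indicator_le_D_test:
  assumes "S \<subseteq> I"
  shows "renyi_of_Q a (test_Q a I p q (indicator S)) \<le> D_test I a X Y"
proof -
  have t: "\<forall>i\<in>I. indicator S i \<in> {0..1::real}" by simp
  have "renyi_of_Q a (test_Q a I p q (indicator S)) =
        renyi_div UNIV a (test_meas I (diag_op (indicator S)) X) (test_meas I (diag_op (indicator S)) Y)"
    by (simp add: renyi_div_test_meas diag_op_def)
  also have "\<dots> \<le> D_test I a X Y"
    unfolding D_test_def using is_test_diag_op[OF finite t] by (intro SUP_upper) simp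
  finally show ?thesis .
qed

lemma D_test_attained: "\<exists>S\<subseteq>I. D_test I a X Y = renyi_of_Q a (test_Q a I p q (indicator S))"
proof -
  obtain S where "S \<subseteq> I" and min:
    "\<And>t. \<forall>i\<in>I. t i \<in> {0..1} \<Longrightarrow> test_Q a I p q (indicator S) \<le> test_Q a I p q t"
    using ex_indicator_test_Q_min[where p = p and q = q, OF finite p_nonneg q_nonneg a] by blast
  have "D_test I a X Y \<le> renyi_of_Q a (test_Q a I p q (indicator S))"
    unfolding D_test_def renyi_div_test_meas
  proof (rule SUP_least)
    fix T assume "T \<in> {T. is_test I T}"
    then have "\<forall>i\<in>I. Re (T i i) \<in> {0..1}"
      using is_test_diagonal_entry[OF _ finite] by simp
    then show "renyi_of_Q a (test_Q a I p q (\<lambda>i. Re (T i i))) \<le> renyi_of_Q a (test_Q a I p q (indicator S))"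
      using min by (intro renyi_of_Q_antimono) (simp_all add: test_Q_nonneg a)
  qed
  with renyi_of_Q_indicator_le_D_test[OF \<open>S \<subseteq> I\<close>] \<open>S \<subseteq> I\<close> show ?thesis
    by (intro exI[of _ S]) simp
qed

lemma D_test_eq_renyi_div_iff:
  "D_test I a X Y = renyi_div I a p q \<longleftrightarrow>
     (\<exists>S\<subseteq>I. proportional_on S p q \<and> proportional_on (I - S) p q)"
proof -
  have "D_test I a X Y = renyi_div I a p q \<longleftrightarrow>
      (\<exists>S\<subseteq>I. test_Q a I p q (indicator S) = (\<Sum>i\<in>I. geom_mean a (p i) (q i)))"
  proof
    assume "D_test I a X Y = renyi_div I a p q"
    moreover obtain S where "S \<subseteq> I" "D_test I a X Y = renyi_of_Q a (test_Q a I p q (indicator S))"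
      using D_test_attained by blast
    ultimately show "\<exists>S\<subseteq>I. test_Q a I p q (indicator S) = (\<Sum>i\<in>I. geom_mean a (p i) (q i))"
      using renyi_of_Q_inject a by (auto simp: renyi_div_eq_renyi_of_Q test_Q_nonneg sum_nonneg)
  next
    assume "\<exists>S\<subseteq>I. test_Q a I p q (indicator S) = (\<Sum>i\<in>I. geom_mean a (p i) (q i))"
    then obtain S where "S \<subseteq> I" "test_Q a I p q (indicator S) = (\<Sum>i\<in>I. geom_mean a (p i) (q i))"
      by blast
    then have "renyi_div I a p q \<le> D_test I a X Y"
      using renyi_of_Q_indicator_le_D_test[of S] by (simp add: renyi_div_eq_renyi_of_Q)
    with D_test_le_renyi_div show "D_test I a X Y = renyi_div I a p q" by simp
  qed
  also have "\<dots> \<longleftrightarrow> (\<exists>S\<subseteq>I. proportional_on S p q \<and> proportional_on (I - S) p q)"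
    using test_Q_indicator_eq_iff[where p = p and q = q, OF finite p_nonneg q_nonneg _ a] by blast
  finally show ?thesis .
qed

end

end

lemma diagonal_states_diag_op:
  assumes "\<forall>\<omega>. 0 \<le> \<rho> \<omega>" "\<forall>\<omega>. 0 \<le> \<sigma> \<omega>"
  shows "diagonal_states (UNIV :: 'a::finite set) \<rho> \<sigma> (diag_op \<rho>) (diag_op \<sigma>)"
  using assms by unfold_locales (simp_all add: diagonal_on_diag_op)

definition tensor_dist :: "nat \<Rightarrow> ('a \<Rightarrow> real) \<Rightarrow> 'a list \<Rightarrow> real" where
  "tensor_dist n p = (\<lambda>xs. \<Prod>k<n. p (xs ! k))"

lemma finite_words: "finite (words n :: 'a::finite list set)"
  using finite_lists_length_eq[of "UNIV :: 'a set" n] by (simp add: words_def)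

lemma words_Suc: "words (Suc n) = (\<lambda>(x, xs). x # xs) ` (UNIV \<times> words n)"
  by (auto simp: words_def length_Suc_conv)

lemma diagonal_on_tensor_pow:
  fixes p :: "'a \<Rightarrow> real"
  shows "diagonal_on (words n) (tensor_dist n p) (tensor_pow n (diag_op p))"
  unfolding diagonal_on_def
proof (intro ballI)
  fix xs ys :: "'a list" assume "xs \<in> words n" "ys \<in> words n"
  show "tensor_pow n (diag_op p) xs ys = (if xs = ys then complex_of_real (tensor_dist n p xs) else 0)"
  proof (cases "xs = ys")
    case False
    then obtain k where "k < n" "xs ! k \<noteq> ys ! k"
      using \<open>xs \<in> words n\<close> \<open>ys \<in> words n\<close> by (auto simp: words_def list_eq_iff_nth_eq)
    then show ?thesis
      using False by (auto simp: tensor_pow_def diag_op_def intro!: prod_zero)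
  qed (simp add: tensor_pow_def tensor_dist_def diag_op_def)
qed

lemma sum_tensor_dist:
  fixes f :: "'a::finite \<Rightarrow> real"
  shows "(\<Sum>xs\<in>words n. tensor_dist n f xs) = (\<Sum>x\<in>UNIV. f x) ^ n"
proof (induction n)
  case 0
  have "words 0 = {[] :: 'a list}" by (auto simp: words_def)
  then show ?case by (simp add: tensor_dist_def)
next
  case (Suc n)
  have inj: "inj_on (\<lambda>(x, xs). x # xs) (UNIV \<times> words n)" by (auto simp: inj_on_def)
  have "(\<Sum>xs\<in>words (Suc n). tensor_dist (Suc n) f xs) =
             (\<Sum>(x, xs)\<in>UNIV \<times> words n. tensor_dist (Suc n) f (x # xs))"
    unfolding words_Suc by (subst sum.reindex[OF inj]) (simp add: case_prod_unfold)
  also have "\<dots> = (\<Sum>(x, xs)\<in>UNIV \<times> words n. f x * tensor_dist n f xs)"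
    by (simp add: tensor_dist_def prod.lessThan_Suc_shift del: prod.lessThan_Suc)
  also have "\<dots> = (\<Sum>x\<in>UNIV. f x) * (\<Sum>xs\<in>words n. tensor_dist n f xs)"
    by (simp add: sum.cartesian_product [symmetric] sum_product)
  finally show ?case using Suc by simp
qed

lemma renyi_div_tensor_dist:
  fixes \<rho> \<sigma> :: "'a::finite \<Rightarrow> real"
  assumes "1 \<le> n" "\<forall>x. 0 \<le> \<rho> x" "\<forall>x. 0 \<le> \<sigma> x"
  shows "renyi_div (words n) a (tensor_dist n \<rho>) (tensor_dist n \<sigma>) = ereal (real n) * renyi_div UNIV a \<rho> \<sigma>"
proof -
  have "geom_mean a (tensor_dist n \<rho> xs) (tensor_dist n \<sigma> xs) =
        tensor_dist n (\<lambda>x. geom_mean a (\<rho> x) (\<sigma> x)) xs" for xs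
    using assms by (simp add: tensor_dist_def geom_mean_def prod_powr_distrib prod.distrib)
  then show ?thesis
    using renyi_of_Q_power[OF sum_nonneg[OF geom_mean_nonneg] assms(1)]
    by (simp add: renyi_div_eq_renyi_of_Q sum_tensor_dist)
qed

lemma diagonal_states_tensor_pow:
  assumes "\<forall>\<omega>. 0 \<le> \<rho> \<omega>" "\<forall>\<omega>. 0 \<le> \<sigma> \<omega>"
  shows "diagonal_states (words n :: 'a::finite list set) (tensor_dist n \<rho>) (tensor_dist n \<sigma>)
           (tensor_pow n (diag_op \<rho>)) (tensor_pow n (diag_op \<sigma>))"
  using assms by unfold_locales
    (simp_all add: finite_words diagonal_on_tensor_pow[unfolded tensor_dist_def] tensor_dist_def prod_nonneg)

lemma proportional_on_image:
  assumes "inj_on h A"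
  shows "proportional_on (h ` A) p q \<longleftrightarrow> proportional_on A (p \<circ> h) (q \<circ> h)"
  using assms by (simp add: proportional_on_def sum.reindex)

lemma D_test_reg_le_renyi_div:
  fixes \<rho> \<sigma> :: "'a::finite \<Rightarrow> real"
  assumes nonneg: "\<forall>\<omega>. 0 \<le> \<rho> \<omega>" "\<forall>\<omega>. 0 \<le> \<sigma> \<omega>" and a: "0 < a" "a < 1"
  shows "D_test_reg a (diag_op \<rho>) (diag_op \<sigma>) \<le> renyi_div UNIV a \<rho> \<sigma>"
  unfolding D_test_reg_def
proof (rule SUP_least)
  fix n :: nat assume "n \<in> {1..}"
  then have "1 \<le> n" by simp
  have "D_test (words n) a (tensor_pow n (diag_op \<rho>)) (tensor_pow n (diag_op \<sigma>))
        \<le> ereal (real n) * renyi_div UNIV a \<rho> \<sigma>"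
    using diagonal_states.D_test_le_renyi_div[OF diagonal_states_tensor_pow[OF nonneg, where n = n] a]
    by (simp add: renyi_div_tensor_dist[OF \<open>1 \<le> n\<close> nonneg])
  then have "ereal (1 / real n) * D_test (words n) a (tensor_pow n (diag_op \<rho>)) (tensor_pow n (diag_op \<sigma>))
        \<le> ereal (1 / real n) * (ereal (real n) * renyi_div UNIV a \<rho> \<sigma>)"
    by (rule ereal_mult_left_mono) simp
  also have "\<dots> = renyi_div UNIV a \<rho> \<sigma>"
    using \<open>1 \<le> n\<close> by (simp flip: mult.assoc)
  finally show "ereal (1 / real n) * D_test (words n) a (tensor_pow n (diag_op \<rho>)) (tensor_pow n (diag_op \<sigma>))
        \<le> renyi_div UNIV a \<rho> \<sigma>" .
qed

lemma D_test_words_1_eq_renyi_div: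
  fixes \<rho> \<sigma> :: "'a::finite \<Rightarrow> real"
  assumes nonneg: "\<forall>\<omega>. 0 \<le> \<rho> \<omega>" "\<forall>\<omega>. 0 \<le> \<sigma> \<omega>" and a: "0 < a" "a < 1"
    and S: "proportional_on S \<rho> \<sigma>" "proportional_on (UNIV - S) \<rho> \<sigma>"
  shows "D_test (words 1) a (tensor_pow 1 (diag_op \<rho>)) (tensor_pow 1 (diag_op \<sigma>)) = renyi_div UNIV a \<rho> \<sigma>"
proof -
  let ?h = "\<lambda>x::'a. [x]"
  have inj: "inj ?h" by (simp add: inj_on_def)
  have words_1: "words 1 = range ?h" by (auto simp: words_def length_Suc_conv)
  have "tensor_dist 1 f \<circ> ?h = f" for f :: "'a \<Rightarrow> real"
    by (simp add: tensor_dist_def fun_eq_iff)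
  moreover have "words 1 - ?h ` S = ?h ` (UNIV - S)"
    unfolding words_1 by (simp only: image_set_diff[OF inj])
  ultimately have "proportional_on (?h ` S) (tensor_dist 1 \<rho>) (tensor_dist 1 \<sigma>)"
    and "proportional_on (words 1 - ?h ` S) (tensor_dist 1 \<rho>) (tensor_dist 1 \<sigma>)"
    using S proportional_on_image[OF inj_on_subset[OF inj], of _ "tensor_dist 1 \<rho>" "tensor_dist 1 \<sigma>"]
    by simp_all
  moreover have "?h ` S \<subseteq> words 1" unfolding words_1 by blast
  ultimately have "D_test (words 1) a (tensor_pow 1 (diag_op \<rho>)) (tensor_pow 1 (diag_op \<sigma>))
                   = renyi_div (words 1) a (tensor_dist 1 \<rho>) (tensor_dist 1 \<sigma>)"
    using diagonal_states.D_test_eq_renyi_div_iff[OF diagonal_states_tensor_pow[OF nonneg] a] by blast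
  also have "\<dots> = renyi_div UNIV a \<rho> \<sigma>"
    by (simp add: renyi_div_tensor_dist[OF _ nonneg])
  finally show ?thesis .
qed

lemma D_test_reg_eq_renyi_div:
  fixes \<rho> \<sigma> :: "'a::finite \<Rightarrow> real"
  assumes nonneg: "\<forall>\<omega>. 0 \<le> \<rho> \<omega>" "\<forall>\<omega>. 0 \<le> \<sigma> \<omega>" and a: "0 < a" "a < 1"
    and S: "proportional_on S \<rho> \<sigma>" "proportional_on (UNIV - S) \<rho> \<sigma>"
  shows "D_test_reg a (diag_op \<rho>) (diag_op \<sigma>) = renyi_div UNIV a \<rho> \<sigma>"
proof (rule antisym)
  show "D_test_reg a (diag_op \<rho>) (diag_op \<sigma>) \<le> renyi_div UNIV a \<rho> \<sigma>"
    by (rule D_test_reg_le_renyi_div[OF nonneg a])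
  show "renyi_div UNIV a \<rho> \<sigma> \<le> D_test_reg a (diag_op \<rho>) (diag_op \<sigma>)"
    unfolding D_test_reg_def using D_test_words_1_eq_renyi_div[OF assms]
    by (intro SUP_upper2[of 1]) simp_all
qed

theorem mainTheorem10:
  fixes \<rho> \<sigma> :: "'a::finite \<Rightarrow> real"
  assumes "\<forall>\<omega>. 0 \<le> \<rho> \<omega>" and "sum \<rho> UNIV = 1"
    and "\<forall>\<omega>. 0 \<le> \<sigma> \<omega>" and "sum \<sigma> UNIV = 1"
  shows "((\<forall>\<alpha>\<in>{0<..<1}. D_test UNIV \<alpha> (diag_op \<rho>) (diag_op \<sigma>) = renyi_div UNIV \<alpha> \<rho> \<sigma>)
          \<longleftrightarrow> (\<exists>\<alpha>\<in>{0<..<1}. D_test UNIV \<alpha> (diag_op \<rho>) (diag_op \<sigma>) = renyi_div UNIV \<alpha> \<rho> \<sigma>))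
       \<and> ((\<exists>\<alpha>\<in>{0<..<1}. D_test UNIV \<alpha> (diag_op \<rho>) (diag_op \<sigma>) = renyi_div UNIV \<alpha> \<rho> \<sigma>)
          \<longleftrightarrow> (\<exists>\<Omega>0 \<Omega>1. \<Omega>1 = UNIV - \<Omega>0
                 \<and> (\<forall>\<omega>\<in>\<Omega>0. sum \<sigma> \<Omega>0 * \<rho> \<omega> = sum \<rho> \<Omega>0 * \<sigma> \<omega>)
                 \<and> (\<forall>\<omega>\<in>\<Omega>1. sum \<sigma> \<Omega>1 * \<rho> \<omega> = sum \<rho> \<Omega>1 * \<sigma> \<omega>)))
       \<and> ((\<forall>\<alpha>\<in>{0<..<1}. D_test UNIV \<alpha> (diag_op \<rho>) (diag_op \<sigma>) = renyi_div UNIV \<alpha> \<rho> \<sigma>)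
          \<longrightarrow> (\<forall>\<alpha>\<in>{0<..<1}.
                 D_test UNIV \<alpha> (diag_op \<rho>) (diag_op \<sigma>) = D_test_reg \<alpha> (diag_op \<rho>) (diag_op \<sigma>)
               \<and> D_test_reg \<alpha> (diag_op \<rho>) (diag_op \<sigma>) = renyi_div UNIV \<alpha> \<rho> \<sigma>))"
proof -
  let ?E = "\<lambda>\<alpha>. D_test UNIV \<alpha> (diag_op \<rho>) (diag_op \<sigma>) = renyi_div UNIV \<alpha> \<rho> \<sigma>"
  let ?partition = "\<exists>S. proportional_on S \<rho> \<sigma> \<and> proportional_on (UNIV - S) \<rho> \<sigma>"
  have equal_iff: "?E \<alpha> \<longleftrightarrow> ?partition" if "\<alpha> \<in> {0<..<1}" for \<alpha>
    using diagonal_states.D_test_eq_renyi_div_iff[OF diagonal_states_diag_op[OF assms(1,3)], of \<alpha>] that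
    by simp
  have regularized: "D_test UNIV \<alpha> (diag_op \<rho>) (diag_op \<sigma>) = D_test_reg \<alpha> (diag_op \<rho>) (diag_op \<sigma>)
      \<and> D_test_reg \<alpha> (diag_op \<rho>) (diag_op \<sigma>) = renyi_div UNIV \<alpha> \<rho> \<sigma>"
    if "\<alpha> \<in> {0<..<1}" "?E \<alpha>" for \<alpha>
    using D_test_reg_eq_renyi_div[OF assms(1,3)] equal_iff that by force
  have partition_iff: "?partition \<longleftrightarrow> (\<exists>\<Omega>0 \<Omega>1. \<Omega>1 = UNIV - \<Omega>0
                 \<and> (\<forall>\<omega>\<in>\<Omega>0. sum \<sigma> \<Omega>0 * \<rho> \<omega> = sum \<rho> \<Omega>0 * \<sigma> \<omega>)
                 \<and> (\<forall>\<omega>\<in>\<Omega>1. sum \<sigma> \<Omega>1 * \<rho> \<omega> = sum \<rho> \<Omega>1 * \<sigma> \<omega>))"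
    by (simp add: proportional_on_def)
  have "1 / 2 \<in> {0<..<1::real}" by simp
  then show ?thesis
    unfolding partition_iff [symmetric] using equal_iff regularized by blast
qed

end
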